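(* For integers $0\le l\le m$ define $B_{l,m}:=\dfrac{A_{l,m}}{2^{l}(m+1-l)_{2l}}$. Then $B_{m,m}=1$, $B_{m-1,m}=2m+1$ (for $m\ge1$), $$B_{l-1,m}=(2m+1)B_{l,m}-(m-l)(m+l+1)B_{l+1,m}\qquad(1\le l\le m-1),$$ and every $B_{l,m}$ ($0\le l\le m$) is an odd integer.
   Context: $A_{l,m}=\frac{l!\,m!}{2^{m-l}}\sum_{k=l}^{m}2^{k}\binom{2m-2k}{m-k}\binom{m+k}{k}\binom{k}{l}$ (equivalently $l!m!2^{m+l}d_{l,m}$ with $d_{l,m}=2^{-2m}\sum_{k=l}^{m}2^{k}\binom{2m-2k}{m-k}\binom{m+k}{m}\binom{k}{l}$). $(x)_k=x(x+1)\cdots(x+k-1)$ for $k\ge1$, $(x)_0=1$. *)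

theory Defs
  imports Complex_Main
begin

definition A :: "nat \<Rightarrow> nat \<Rightarrow> real" where
  "A l m = fact l * fact m / 2 ^ (m - l) *
     (\<Sum>k = l..m. 2 ^ k * real ((2*m - 2*k) choose (m - k)) * real ((m + k) choose k) * real (k choose l))"

definition B :: "nat \<Rightarrow> nat \<Rightarrow> real" where
  "B l m = A l m / (2 ^ l * pochhammer (real m + 1 - real l) (2 * l))"

end

theory Submission
  imports Defs
begin

(*
  Write c_k = 2^k C(2m-2k, m-k) C(m+k, k) for the coefficients appearing in A_{l,m}
  and M_j = sum_k c_k C(k, j) for their binomial moments (M_j = f^(j)(1)/j! where
  f(x) = sum_k c_k x^k).  Unfolding the definitions, B_{l,m} = m!/2^m * w_l * M_l with
  the weight w_l = l! (m-l)! / (m+l)!.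

  The coefficients satisfy the first-order recurrence
    (k+1)(2m-2k-1) c_{k+1} = (m-k)(m+k+1) c_k,
  and summing it against binomial coefficients (an index shift, after expanding the
  polynomial weights in the binomial basis C(k,j), C(k,j+1), C(k,j+2)) yields the
  three-term recurrence
    (m-j)(m+j+1) M_j = (2m+1)(j+1) M_{j+1} - (j+1)(j+2) M_{j+2}.
  Together with (l+1) w_l = (m-l)(m+l+1) w_{l+1} this is exactly the claimed recurrence
  for B.  With B_{m,m} = 1 and B_{m-1,m} = 2m+1 it generates all B_{l,m} downwards from
  l = m; since the multiplier (m-l)(m+l+1) is a product of two numbers of opposite
  parity, all B_{l,m} are odd integers.
*)

lemma real_Suc_times_binomial:
  "real (Suc n) * real (n choose k) = real (Suc n choose Suc k) * real (Suc k)"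
  by (metis Suc_times_binomial_eq of_nat_mult)

lemma central_binomial_step:
  "real (Suc r) * real ((2*r+2) choose (r+1)) = 2 * (2 * real r + 1) * real ((2*r) choose r)"
proof -
  define X where "X = real (Suc (2*r) choose Suc r)"
  have sym: "Suc (2*r) choose r = Suc (2*r) choose Suc r"
    using binomial_symmetric[of r "Suc (2*r)"] by simp
  have "real (Suc r) * real ((2*r+2) choose (r+1)) = real (Suc (Suc (2*r))) * X"
    using real_Suc_times_binomial[of "Suc (2*r)" r] unfolding X_def sym by simp
  also have "\<dots> = 2 * (X * real (Suc r))"
    by simp
  also have "X * real (Suc r) = real (Suc (2*r)) * real ((2*r) choose r)"
    using real_Suc_times_binomial[of "2*r" r] unfolding X_def by simp
  finally show ?thesis by simp
qed

definition coeff :: "nat \<Rightarrow> nat \<Rightarrow> real" where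
  "coeff m k = 2 ^ k * real ((2*m - 2*k) choose (m - k)) * real ((m + k) choose k)"

lemma coeff_step:
  assumes "k < m"
  shows "real (Suc k) * (2 * real m - 2 * real k - 1) * coeff m (Suc k)
       = (real m - real k) * (real m + real k + 1) * coeff m k"
proof -
  obtain r where m: "m = Suc (k + r)" using assms less_imp_Suc_add by blast
  have idx: "2*m - 2*k = 2*r+2" "m - k = r+1" "2*m - 2*Suc k = 2*r" "m - Suc k = r"
    using m by auto
  have upper: "real (Suc (m+k)) * real ((m+k) choose k) = real (m + Suc k choose Suc k) * real (Suc k)"
    using real_Suc_times_binomial[of "m+k" k] by simp
  have "real (Suc k) * (2 * real m - 2 * real k - 1) * coeff m (Suc k)
      = 2 ^ k * (2 * (2 * real r + 1) * real ((2*r) choose r)) * (real (m + Suc k choose Suc k) * real (Suc k))"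
    unfolding coeff_def idx using m by (simp add: algebra_simps del: binomial_Suc_Suc)
  also have "\<dots> = 2 ^ k * (real (Suc r) * real ((2*r+2) choose (r+1))) * (real (Suc (m+k)) * real ((m+k) choose k))"
    by (simp only: central_binomial_step upper)
  also have "\<dots> = (real m - real k) * (real m + real k + 1) * coeff m k"
    unfolding coeff_def idx using m by (simp add: algebra_simps del: binomial_Suc_Suc)
  finally show ?thesis .
qed

lemma real_times_choose_pred:
  "real k * real ((k - 1) choose j) = real (Suc j) * real (k choose Suc j)"
proof (cases k)
  case (Suc n)
  have "real (Suc n) * real (n choose j) = real (Suc n choose Suc j) * real (Suc j)"
    by (rule real_Suc_times_binomial)
  then show ?thesis using Suc by (simp only: diff_Suc_1 mult.commute)
qed simp

lemma real_times_choose: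
  "real k * real (k choose j) = real j * real (k choose j) + real (Suc j) * real (k choose Suc j)"
proof (cases "j \<le> k")
  case True
  have "real (k - j) * real (k choose j) = real (Suc j) * real (k choose Suc j)"
    by (metis binomial_absorb_comp of_nat_mult real_times_choose_pred)
  with True show ?thesis
    by (simp add: of_nat_diff algebra_simps)
next
  case False
  then show ?thesis by (simp add: binomial_eq_0)
qed

lemma left_weight_expansion:
  "real k * (2 * real m + 1 - 2 * real k) * real ((k - 1) choose j)
   = (2 * real m - 2 * real j - 1) * real (Suc j) * real (k choose (j+1))
     - 2 * real (j+1) * real (j+2) * real (k choose (j+2))"
proof -
  have "real k * (2 * real m + 1 - 2 * real k) * real ((k - 1) choose j)
      = (2 * real m + 1 - 2 * real k) * (real k * real ((k - 1) choose j))"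
    by (simp only: mult_ac)
  also have "\<dots> = (2 * real m + 1 - 2 * real k) * real (Suc j) * real (k choose Suc j)"
    by (simp only: real_times_choose_pred mult.assoc)
  also have "\<dots> = (2 * real m + 1) * real (Suc j) * real (k choose Suc j)
      - 2 * real (Suc j) * (real k * real (k choose Suc j))"
    by (simp add: algebra_simps)
  also have "\<dots> = (2 * real m - 2 * real j - 1) * real (Suc j) * real (k choose (j+1))
     - 2 * real (j+1) * real (j+2) * real (k choose (j+2))"
    unfolding real_times_choose[of k "Suc j"] by (simp add: algebra_simps del: binomial_Suc_Suc)
  finally show ?thesis .
qed

lemma right_weight_expansion:
  "(real m - real k) * (real m + real k + 1) * real (k choose j)
   = (real m * (real m + 1) - real j * (real j + 1)) * real (k choose j)
     - 2 * real (j+1) * real (j+1) * real (k choose (j+1))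
     - real (j+1) * real (j+2) * real (k choose (j+2))"
proof -
  define c0 c1 c2 where "c0 = real (k choose j)" and "c1 = real (k choose (j+1))"
    and "c2 = real (k choose (j+2))"
  have h0: "real k * c0 = real j * c0 + real (j+1) * c1"
    using real_times_choose[of k j] unfolding c0_def c1_def by simp
  have h1: "real k * c1 = real (j+1) * c1 + real (j+2) * c2"
    using real_times_choose[of k "j+1"] unfolding c1_def c2_def by simp
  have "(real m - real k) * (real m + real k + 1) * c0
      = real m * (real m + 1) * c0 - (real k * c0) - real k * (real k * c0)"
    by (simp add: algebra_simps)
  also have "\<dots> = real m * (real m + 1) * c0 - (real j * c0 + real (j+1) * c1)
      - real k * (real j * c0 + real (j+1) * c1)"
    unfolding h0 ..
  also have "\<dots> = real m * (real m + 1) * c0 - (real j * c0 + real (j+1) * c1)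
      - real j * (real k * c0) - real (j+1) * (real k * c1)"
    by (simp add: algebra_simps)
  also have "\<dots> = (real m * (real m + 1) - real j * (real j + 1)) * c0
     - 2 * real (j+1) * real (j+1) * c1 - real (j+1) * real (j+2) * c2"
    unfolding h0 h1 by (simp add: algebra_simps)
  finally show ?thesis unfolding c0_def c1_def c2_def .
qed


definition moment :: "nat \<Rightarrow> nat \<Rightarrow> real" where
  "moment m j = (\<Sum>k\<le>m. coeff m k * real (k choose j))"

lemma moment_vanishes: "m < j \<Longrightarrow> moment m j = 0"
  unfolding moment_def by (intro sum.neutral) (auto simp: binomial_eq_0)

text \<open>Summing the coefficient recurrence after an index shift k = i+1.\<close>
lemma coeff_sum_shift:
  "(\<Sum>k\<le>m. real k * (2 * real m + 1 - 2 * real k) * real ((k - 1) choose j) * coeff m k)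
   = (\<Sum>k\<le>m. (real m - real k) * (real m + real k + 1) * real (k choose j) * coeff m k)"
proof (cases m)
  case (Suc n)
  have "(\<Sum>k\<le>m. real k * (2 * real m + 1 - 2 * real k) * real ((k - 1) choose j) * coeff m k)
      = (\<Sum>i\<le>n. real (i choose j) * (real (Suc i) * (2 * real m - 2 * real i - 1) * coeff m (Suc i)))"
    unfolding Suc sum.atMost_Suc_shift by (simp add: algebra_simps)
  also have "\<dots> = (\<Sum>i\<le>n. real (i choose j) * ((real m - real i) * (real m + real i + 1) * coeff m i))"
  proof (intro sum.cong refl)
    fix i assume "i \<in> {..n}"
    then have "i < m" using Suc by simp
    then show "real (i choose j) * (real (Suc i) * (2 * real m - 2 * real i - 1) * coeff m (Suc i))
        = real (i choose j) * ((real m - real i) * (real m + real i + 1) * coeff m i)"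
      by (simp only: coeff_step)
  qed
  also have "\<dots> = (\<Sum>k\<le>m. (real m - real k) * (real m + real k + 1) * real (k choose j) * coeff m k)"
    unfolding Suc sum.atMost_Suc by (simp add: algebra_simps)
  finally show ?thesis .
qed simp

lemma sum_coeff_binomial_combination:
  "(\<Sum>k\<le>m. (x * real (k choose j) + y * real (k choose (j+1)) + z * real (k choose (j+2))) * coeff m k)
   = x * moment m j + y * moment m (j+1) + z * moment m (j+2)"
  unfolding moment_def by (simp add: sum.distrib sum_distrib_left algebra_simps)

lemma moment_step:
  "(real m - real j) * (real m + real j + 1) * moment m j
   = (2 * real m + 1) * real (Suc j) * moment m (Suc j) - real (Suc j) * real (j+2) * moment m (j+2)"
proof -
  let ?A = "(2 * real m - 2 * real j - 1) * real (Suc j)" and ?B = "2 * real (j+1) * real (j+2)"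
  let ?P = "real m * (real m + 1) - real j * (real j + 1)"
    and ?Q = "2 * real (j+1) * real (j+1)" and ?R = "real (j+1) * real (j+2)"
  have "?A * moment m (j+1) - ?B * moment m (j+2)
      = 0 * moment m j + ?A * moment m (j+1) + (- ?B) * moment m (j+2)"
    by simp
  also have "\<dots> = (\<Sum>k\<le>m. (0 * real (k choose j) + ?A * real (k choose (j+1)) + (- ?B) * real (k choose (j+2))) * coeff m k)"
    by (rule sum_coeff_binomial_combination[symmetric])
  also have "\<dots> = (\<Sum>k\<le>m. real k * (2 * real m + 1 - 2 * real k) * real ((k - 1) choose j) * coeff m k)"
    by (intro sum.cong refl) (simp only: left_weight_expansion, simp)
  also have "\<dots> = (\<Sum>k\<le>m. (real m - real k) * (real m + real k + 1) * real (k choose j) * coeff m k)"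
    by (rule coeff_sum_shift)
  also have "\<dots> = (\<Sum>k\<le>m. (?P * real (k choose j) + (- ?Q) * real (k choose (j+1)) + (- ?R) * real (k choose (j+2))) * coeff m k)"
    by (intro sum.cong refl) (simp only: right_weight_expansion, simp)
  also have "\<dots> = ?P * moment m j + (- ?Q) * moment m (j+1) + (- ?R) * moment m (j+2)"
    by (rule sum_coeff_binomial_combination)
  finally show ?thesis by (simp add: algebra_simps)
qed


lemma pochhammer_as_fact_quotient:
  assumes "l \<le> m"
  shows "pochhammer (real m + 1 - real l) (2 * l) = fact (m + l) / fact (m - l)"
proof -
  have "m + l = m - l + 2 * l" using assms by simp
  then have "(fact (m + l) :: real) = pochhammer 1 (m - l + 2 * l)"
    by (simp only: pochhammer_fact)
  also have "\<dots> = pochhammer 1 (m - l) * pochhammer (1 + real (m - l)) (2 * l)"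
    by (rule pochhammer_product')
  also have "\<dots> = fact (m - l) * pochhammer (real m + 1 - real l) (2 * l)"
    using assms by (simp add: pochhammer_fact of_nat_diff add_diff_eq add.commute[of 1])
  finally show ?thesis by (simp add: field_simps)
qed

definition weight :: "nat \<Rightarrow> nat \<Rightarrow> real" where
  "weight m l = fact l * fact (m - l) / fact (m + l)"

lemma weight_step:
  assumes "l < m"
  shows "real (Suc l) * weight m l = (real m - real l) * (real m + real l + 1) * weight m (Suc l)"
proof -
  obtain q where m: "m = Suc (l + q)" using assms less_imp_Suc_add by blast
  then have idx: "m - l = Suc q" "m - Suc l = q" "m + Suc l = Suc (m + l)"
    and diff: "real m - real l = real q + 1" by auto
  define F where "F = (fact (m + l) :: real)"
  have nz: "F \<noteq> 0" "(real m + real l + 1) * F \<noteq> 0" unfolding F_def by simp_all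
  have w0: "weight m l = fact l * ((real q + 1) * fact q) / F"
    unfolding weight_def idx F_def by (simp add: fact_Suc)
  have w1: "weight m (Suc l) = (real l + 1) * fact l * fact q / ((real m + real l + 1) * F)"
    unfolding weight_def idx F_def by (simp add: fact_Suc algebra_simps)
  show ?thesis
    unfolding w0 w1 diff using nz by (simp add: field_simps)
qed

lemma B_eq_weighted_moment:
  assumes "l \<le> m"
  shows "B l m = fact m / 2 ^ m * weight m l * moment m l"
proof -
  have sum_eq: "(\<Sum>k = l..m. 2 ^ k * real ((2*m - 2*k) choose (m - k)) * real ((m + k) choose k)
                  * real (k choose l)) = moment m l"
    unfolding moment_def coeff_def
    by (rule sum.mono_neutral_left) (auto simp: binomial_eq_0)
  have "(2::real) ^ (m - l) * 2 ^ l = 2 ^ m"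
    using assms by (simp flip: power_add)
  then show ?thesis
    unfolding B_def A_def sum_eq pochhammer_as_fact_quotient[OF assms] weight_def
    by (simp add: field_simps)
qed

text \<open>The top value B_{m,m} = 1: only the term k = m survives in M_m.\<close>
lemma B_diagonal: "B m m = 1"
proof -
  have "moment m m = coeff m m"
    unfolding moment_def by (simp add: binomial_eq_0 lessThan_Suc_atMost[symmetric])
  then show ?thesis
    unfolding B_eq_weighted_moment[OF order_refl] weight_def coeff_def
    by (simp add: binomial_fact mult_2 field_simps)
qed


text \<open>The last term of the recurrence for B in moment form; for l = m both sides vanish.\<close>
lemma B_shifted_term:
  assumes "l \<le> m"
  shows "(real m - real l) * (real m + real l + 1) * B (Suc l) m
       = fact m / 2 ^ m * real (Suc l) * weight m l * moment m (Suc l)"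
proof (cases "l < m")
  case True
  then have "(real m - real l) * (real m + real l + 1) * B (Suc l) m
      = fact m / 2 ^ m * ((real m - real l) * (real m + real l + 1) * weight m (Suc l)) * moment m (Suc l)"
    by (simp add: B_eq_weighted_moment)
  also have "\<dots> = fact m / 2 ^ m * (real (Suc l) * weight m l) * moment m (Suc l)"
    by (simp only: weight_step[OF True])
  finally show ?thesis by (simp only: mult.assoc)
next
  case False
  with assms show ?thesis by (simp add: moment_vanishes)
qed

text \<open>The three-term recurrence for B, combining the recurrences of weights and moments.\<close>
lemma B_step:
  assumes "1 \<le> l" "l \<le> m"
  shows "B (l - 1) m = (2 * real m + 1) * B l m - (real m - real l) * (real m + real l + 1) * B (l + 1) m"
proof -
  obtain p where l: "l = Suc p" using assms(1) by (cases l) auto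
  with assms have "p < m" by simp
  define K where "K = (fact m / 2 ^ m :: real)"
  have "real l * B (l - 1) m = K * moment m p * (real (Suc p) * weight m p)"
    unfolding l K_def using \<open>p < m\<close> by (simp add: B_eq_weighted_moment)
  also have "\<dots> = K * weight m l * ((real m - real p) * (real m + real p + 1) * moment m p)"
    unfolding weight_step[OF \<open>p < m\<close>] l by (simp only: mult_ac)
  also have "\<dots> = K * weight m l * ((2 * real m + 1) * real l * moment m l
                 - real l * real (Suc l) * moment m (Suc l))"
    unfolding moment_step l by (simp add: numeral_2_eq_2)
  also have "\<dots> = real l * ((2 * real m + 1) * (K * weight m l * moment m l)
                 - K * real (Suc l) * weight m l * moment m (Suc l))"
    by (simp add: algebra_simps)
  also have "\<dots> = real l * ((2 * real m + 1) * B l m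
                 - (real m - real l) * (real m + real l + 1) * B (Suc l) m)"
    unfolding K_def B_shifted_term[OF assms(2)] B_eq_weighted_moment[OF assms(2)] ..
  finally show ?thesis using l by simp
qed


text \<open>The case l = m of the recurrence gives B_{m-1,m} = 2m+1.\<close>
lemma B_subdiagonal:
  assumes "1 \<le> m"
  shows "B (m - 1) m = 2 * real m + 1"
  using B_step[OF assms order_refl] by (simp add: B_diagonal)

definition odd_integer :: "real \<Rightarrow> bool" where
  "odd_integer x \<longleftrightarrow> (\<exists>k::int. odd k \<and> x = of_int k)"

lemma odd_integer_recurrence:
  fixes x :: "nat \<Rightarrow> real"
  assumes start: "odd_integer (x 0)" "1 \<le> n \<Longrightarrow> odd_integer (x 1)"
    and step: "\<And>i. Suc (Suc i) \<le> n \<Longrightarrow>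
      \<exists>u v. odd u \<and> even v \<and> x (Suc (Suc i)) = of_int u * x (Suc i) - of_int v * x i"
    and "i \<le> n"
  shows "odd_integer (x i)"
  using \<open>i \<le> n\<close>
proof (induction i rule: less_induct)
  case (less i)
  consider "i = 0" | "i = 1" | j where "i = Suc (Suc j)"
    by (metis One_nat_def not0_implies_Suc)
  then show ?case
  proof cases
    case 3
    obtain u v where uv: "odd u" "even v" "x i = of_int u * x (Suc j) - of_int v * x j"
      using step less.prems 3 by blast
    obtain a b where "odd a" "x (Suc j) = of_int a" "odd b" "x j = of_int b"
      using less 3 unfolding odd_integer_def by (metis Suc_leD lessI less_SucI)
    with uv show ?thesis
      unfolding odd_integer_def by (intro exI[of _ "u * a - v * b"]) simp
  qed (use start less.prems in auto)
qed

text \<open>All B_{l,m} are odd integers: apply the previous lemma to i |-> B_{m-i,m};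
  the multiplier (i+1)(2m-i) is even since its factors have odd sum 2m+1.\<close>
lemma B_odd_integer:
  assumes "l \<le> m"
  shows "odd_integer (B l m)"
proof -
  have "odd_integer (B (m - i) m)" if "i \<le> m" for i
  proof (rule odd_integer_recurrence[where x = "\<lambda>i. B (m - i) m", OF _ _ _ that])
    show "odd_integer (B (m - 0) m)"
      unfolding odd_integer_def by (intro exI[of _ 1]) (simp add: B_diagonal)
    show "odd_integer (B (m - 1) m)" if "1 \<le> m"
      unfolding odd_integer_def B_subdiagonal[OF that] by (intro exI[of _ "2 * int m + 1"]) simp
  next
    fix i assume i: "Suc (Suc i) \<le> m"
    define L where "L = m - Suc i"
    have L: "1 \<le> L" "L \<le> m" "L - 1 = m - Suc (Suc i)" "L + 1 = m - i"
      using i unfolding L_def by auto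
    have v: "(real m - real L) * (real m + real L + 1) = of_int (int (Suc i) * int (2 * m - i))"
      using i unfolding L_def by (simp add: of_nat_diff algebra_simps)
    have "even (int (Suc i) * int (2 * m - i))"
      using i by (cases "even i") (auto simp: even_diff_nat)
    then show "\<exists>u v. odd u \<and> even v \<and> B (m - Suc (Suc i)) m
               = of_int u * B (m - Suc i) m - of_int v * B (m - i) m"
      using B_step[OF L(1,2)] unfolding L v
      by (intro exI[of _ "2 * int m + 1"] exI[of _ "int (Suc i) * int (2 * m - i)"])
         (simp add: L_def)
  qed
  with assms show ?thesis
    by (metis diff_diff_cancel diff_le_self)
qed


theorem mainTheorem10:
  shows "(\<forall>m. B m m = 1)
    \<and> (\<forall>m. m \<ge> 1 \<longrightarrow> B (m - 1) m = 2 * real m + 1)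
    \<and> (\<forall>m l. 1 \<le> l \<and> l + 1 \<le> m \<longrightarrow>
          B (l - 1) m = (2 * real m + 1) * B l m
                        - (real m - real l) * (real m + real l + 1) * B (l + 1) m)
    \<and> (\<forall>m l. l \<le> m \<longrightarrow> (\<exists>k::int. odd k \<and> B l m = of_int k))"
  using B_diagonal B_subdiagonal B_step B_odd_integer
  unfolding odd_integer_def by simp

end
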